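(* Let $f$ be a (possibly randomized) model and $P_{XY}$ a task distribution such that the loss satisfies $0 \le \ell(f(X),Y) \le 1$ almost surely. Let $\epsilon>0$ be the desired estimation error level and $0<\delta<1$ the failure probability. (Upper bound) There is an absolute constant $C>0$ such that, for all sufficiently small $\epsilon>0$ and all $\delta\in(0,1)$, there exists an online evaluation algorithm that is $(n,\epsilon,\delta)$-certified with $$n \le C\,\frac{\ln(1/\delta)+\ln\ln(1/\epsilon)}{\epsilon^{2}}.$$ (Matching lower bound) For any function $n'(\epsilon,\delta,f,P_{XY})$ such that $$\lim_{\epsilon,\delta\to 0} n'(\epsilon,\delta,f,P_{XY})\,\frac{\epsilon^{2}}{\ln(1/\delta)+\ln\ln(1/\epsilon)} = 0,$$ no algorithm can be $(n'(\epsilon,\delta,f,P_{XY}),\epsilon,\delta)$-certified for all sufficiently small $\epsilon$ and $\delta$.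
   Context: A model $f$ maps inputs $X$ to outputs; $P_{XY}$ is a joint distribution of (input, reference) pairs $(X,Y)$, and $\ell$ is a loss function. The prediction error is $R = R(f,P_{XY}) := \mathbb{E}_{(X,Y)\sim P_{XY}}\ell(f(X),Y)$. Test points are drawn i.i.d. from $P_{XY}$. An online evaluation algorithm sequentially selects test points, evaluates their losses $Z_i=\ell(f(X_i),Y_i)$, and after each step may output an estimate $\hat R$ of $R$ together with a confidence interval $[\hat R-\hat\epsilon,\hat R+\hat\epsilon]$; it terminates once it has produced a confidence interval of radius at most $\epsilon$ (the desired estimation error level), or when available test points are exhausted. Let $N$ denote the number of evaluated test points at termination. An algorithm is called $(n,\epsilon,\delta)$-certified if $$\mathbb{P}\big(N\ge n \text{ or the algorithm produces at least one confidence interval that does not contain } R\big)\le \delta.$$ (For the upper bound, the paper's witness is the vanilla sequential algorithm: at round $n=1,2,\dots$ draw a fresh point, evaluate its loss, set $\hat R_n = n^{-1}\sum_{i\le n}Z_i$ and $\epsilon_n=\sqrt{(2\ln(\log_2 n+1)+\ln(4/\delta))/n}$, and stop when $\epsilon_n\le\epsilon$.) *)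

theory Defs
  imports "HOL-Probability.Probability"
begin

text \<open>Loss distributions: the law of Z = loss(f(X),Y) under P_XY (and the model's randomness),
  a probability measure on the reals concentrated on [0,1].\<close>
definition loss_dist :: "real measure \<Rightarrow> bool" where
  "loss_dist D \<longleftrightarrow> prob_space D \<and> sets D = sets borel \<and> (AE z in D. 0 \<le> z \<and> z \<le> 1)"

definition risk :: "real measure \<Rightarrow> real" where
  "risk D = integral\<^sup>L D (\<lambda>z. z)"

text \<open>An online evaluation algorithm: given an internal random seed u and the losses
  Z_1..Z_n observed so far, it outputs (estimate, radius) after step n.\<close>
type_synonym alg = "real \<Rightarrow> real list \<Rightarrow> real \<times> real"

definition online_alg :: "alg \<Rightarrow> bool" where
  "online_alg A \<longleftrightarrow>
     (\<forall>n::nat. (\<lambda>(u, zs). A u (map zs [0..<n]))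
        \<in> borel \<Otimes>\<^sub>M PiM UNIV (\<lambda>_::nat. borel) \<rightarrow>\<^sub>M borel)"

text \<open>Sample space: uniform seed times an i.i.d. sequence of losses (zs i = Z_{i+1}).\<close>
definition sample_space :: "real measure \<Rightarrow> (real \<times> (nat \<Rightarrow> real)) measure" where
  "sample_space D = uniform_measure lborel {0..1} \<Otimes>\<^sub>M PiM UNIV (\<lambda>_::nat. D)"

definition est :: "alg \<Rightarrow> real \<Rightarrow> (nat \<Rightarrow> real) \<Rightarrow> nat \<Rightarrow> real" where
  "est A u zs k = fst (A u (map zs [0..<k]))"

definition rad :: "alg \<Rightarrow> real \<Rightarrow> (nat \<Rightarrow> real) \<Rightarrow> nat \<Rightarrow> real" where
  "rad A u zs k = snd (A u (map zs [0..<k]))"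

text \<open>Failure event: N \<ge> n (no radius \<le> eps at any step k \<ge> 1 with k < n; N = \<infinity> if it
  never terminates), or some interval produced at a step k \<le> N misses R.\<close>
definition failure_event :: "alg \<Rightarrow> real \<Rightarrow> real \<Rightarrow> real \<Rightarrow> (real \<times> (nat \<Rightarrow> real)) set" where
  "failure_event A R n eps =
     {(u, zs). (\<forall>k::nat. 1 \<le> k \<and> real k < n \<longrightarrow> rad A u zs k > eps)
       \<or> (\<exists>k::nat. 1 \<le> k \<and> (\<forall>j. 1 \<le> j \<and> j < k \<longrightarrow> rad A u zs j > eps)
              \<and> \<not> (est A u zs k - rad A u zs k \<le> R \<and> R \<le> est A u zs k + rad A u zs k))}"

definition certified :: "alg \<Rightarrow> real measure \<Rightarrow> real \<Rightarrow> real \<Rightarrow> real \<Rightarrow> bool" where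
  "certified A D n eps \<delta> \<longleftrightarrow> measure (sample_space D) (failure_event A (risk D) n eps) \<le> \<delta>"

end

theory Submission
  imports Defs
begin

text \<open>
  Upper bound: until \<open>m = \<lceil>ln (2/\<delta>) / (2 \<epsilon>\<^sup>2)\<rceil>\<close> losses have been seen, report the interval
  \<open>[-1/2, 3/2]\<close>, which contains every risk; then report the empirical mean with radius \<open>\<epsilon>\<close>.
  By Hoeffding's inequality this fails with probability at most \<open>2 exp (-2 m \<epsilon>\<^sup>2) \<le> \<delta>\<close>, and
  \<open>m \<le> (ln (1/\<delta>) + ln (ln (1/\<epsilon>))) / \<epsilon>\<^sup>2\<close> once \<open>\<epsilon> < exp (- exp 2)\<close>.

  Lower bound: along the diagonal \<open>\<delta> = \<epsilon>\<close> it suffices to show \<open>n \<epsilon>\<^sup>2 > ln (1/\<epsilon>) / 144\<close> for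
  every algorithm certified both for Bernoulli(1/2) and for Bernoulli(1/2 + 3\<epsilon>) losses. Let \<open>G\<close> be
  the event that the algorithm stops before step \<open>n\<close> with an interval containing \<open>1/2\<close>. Under
  Bernoulli(1/2) the complement of \<open>G\<close> is a failure, under Bernoulli(1/2 + 3\<epsilon>) the event \<open>G\<close> is
  one, so both have probability at most \<open>\<epsilon>\<close>. Now \<open>G\<close> depends only on the first \<open>K = \<lceil>n\<rceil>\<close>
  losses, and on sequences whose first \<open>K\<close> entries are at least half ones (probability at least
  \<open>1/2\<close> under Bernoulli(1/2), by 0/1 symmetry) the likelihood ratio of the two laws is at least
  \<open>(1 - 36 \<epsilon>\<^sup>2)\<^sup>K\<close>. Hence \<open>\<epsilon> \<ge> (1 - 36 \<epsilon>\<^sup>2)\<^sup>K (1/2 - \<epsilon>)\<close>, which fails when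
  \<open>n \<epsilon>\<^sup>2 \<le> ln (1/\<epsilon>) / 144\<close>.
\<close>

section \<open>Product measures of i.i.d. sequences\<close>

lemma nn_integral_PiM_case_nat:
  assumes "prob_space D" and F: "F \<in> borel_measurable (PiM UNIV (\<lambda>_. D))"
  shows "(\<integral>\<^sup>+zs. F zs \<partial>PiM UNIV (\<lambda>_. D)) = (\<integral>\<^sup>+a. \<integral>\<^sup>+w. F (case_nat a w) \<partial>PiM UNIV (\<lambda>_. D) \<partial>D)"
proof -
  interpret S: sequence_space D
    by (simp add: sequence_space_def product_prob_space_def product_prob_space_axioms_def
        product_sigma_finite_def assms prob_space_imp_sigma_finite)
  have [measurable]: "F \<in> borel_measurable S.S" by (rule F)
  have "(\<integral>\<^sup>+zs. F zs \<partial>S.S) = (\<integral>\<^sup>+zs. F zs \<partial>distr (D \<Otimes>\<^sub>M S.S) S.S (\<lambda>(s, w). case_nat s w))"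
    by (simp add: S.PiM_iter)
  also have "\<dots> = (\<integral>\<^sup>+x. F (case_nat (fst x) (snd x)) \<partial>(D \<Otimes>\<^sub>M S.S))"
    by (subst nn_integral_distr) (simp_all add: split_beta')
  also have "\<dots> = (\<integral>\<^sup>+a. \<integral>\<^sup>+w. F (case_nat a w) \<partial>S.S \<partial>D)"
    by (subst S.nn_integral_fst[symmetric]) simp_all
  finally show ?thesis .
qed

lemma emeasure_pair_measure_mono_sections:
  assumes "sigma_finite_measure M1" "sigma_finite_measure M2"
    and X: "X \<in> sets (N \<Otimes>\<^sub>M M1)" and Y: "Y \<in> sets (N \<Otimes>\<^sub>M M2)"
    and sections: "\<And>x. c * emeasure M1 (Pair x -` X) \<le> emeasure M2 (Pair x -` Y)"
  shows "c * emeasure (N \<Otimes>\<^sub>M M1) X \<le> emeasure (N \<Otimes>\<^sub>M M2) Y"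
proof -
  interpret M1: sigma_finite_measure M1 by fact
  interpret M2: sigma_finite_measure M2 by fact
  have "c * emeasure (N \<Otimes>\<^sub>M M1) X = (\<integral>\<^sup>+x. c * emeasure M1 (Pair x -` X) \<partial>N)"
    using X by (simp add: M1.emeasure_pair_measure_alt nn_integral_cmult M1.measurable_emeasure_Pair)
  also have "\<dots> \<le> (\<integral>\<^sup>+x. emeasure M2 (Pair x -` Y) \<partial>N)"
    by (intro nn_integral_mono sections)
  also have "\<dots> = emeasure (N \<Otimes>\<^sub>M M2) Y"
    using Y by (simp add: M2.emeasure_pair_measure_alt)
  finally show ?thesis .
qed

lemma distr_PiM_coordinate_borel:
  assumes "prob_space D" "sets D = sets borel"
  shows "distr (PiM UNIV (\<lambda>_. D)) borel (\<lambda>zs. zs i) = D"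
proof -
  have "distr (PiM UNIV (\<lambda>_. D)) borel (\<lambda>zs. zs i) = distr (PiM UNIV (\<lambda>_. D)) D (\<lambda>zs. zs i)"
    using assms by (intro distr_cong) auto
  also have "\<dots> = D" using assms by (intro distr_PiM_component) auto
  finally show ?thesis .
qed

lemma indep_vars_PiM_coordinates:
  assumes D: "prob_space D" "sets D = sets borel"
  shows "prob_space.indep_vars (PiM UNIV (\<lambda>_. D)) (\<lambda>_. borel) (\<lambda>i zs. zs i) UNIV"
proof -
  interpret P: prob_space "PiM UNIV (\<lambda>_. D)" by (intro prob_space_PiM D)
  have sets_P: "sets (PiM UNIV (\<lambda>_. D)) = sets (PiM UNIV (\<lambda>_. borel))"
    using D by (intro sets_PiM_cong) auto
  have [measurable]: "(\<lambda>zs. zs i) \<in> borel_measurable (PiM UNIV (\<lambda>_. D))" for i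
    unfolding measurable_cong_sets[OF sets_P refl] by simp
  have "distr (PiM UNIV (\<lambda>_. D)) (PiM UNIV (\<lambda>_. borel)) (\<lambda>zs. \<lambda>i\<in>UNIV. zs i)
      = distr (PiM UNIV (\<lambda>_. D)) (PiM UNIV (\<lambda>_. D)) (\<lambda>zs. zs)"
    using sets_P by (intro distr_cong) auto
  also have "\<dots> = PiM UNIV (\<lambda>i. distr (PiM UNIV (\<lambda>_. D)) borel (\<lambda>zs. zs i))"
    using D by (simp add: distr_PiM_coordinate_borel)
  finally show ?thesis
    by (subst P.indep_vars_iff_distr_eq_PiM) simp_all
qed

definition truncate_seq :: "nat \<Rightarrow> (nat \<Rightarrow> real) \<Rightarrow> nat \<Rightarrow> real" where
  "truncate_seq K zs = (\<lambda>i. if i < K then zs i else 0)"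

lemma truncate_seq_Suc: "truncate_seq (Suc K) (case_nat s w) = case_nat s (truncate_seq K w)"
  by (auto simp: truncate_seq_def fun_eq_iff split: nat.split)

lemma map_truncate_seq: "k \<le> K \<Longrightarrow> map (truncate_seq K zs) [0..<k] = map zs [0..<k]"
  by (auto simp: truncate_seq_def)

lemma measurable_truncate_seq [measurable]:
  "truncate_seq K \<in> PiM UNIV (\<lambda>_. borel) \<rightarrow>\<^sub>M PiM UNIV (\<lambda>_. borel)"
  unfolding truncate_seq_def by (rule measurable_PiM_single') auto

lemma measurable_PiM_map_coordinates:
  assumes "\<phi> \<in> M \<rightarrow>\<^sub>M N"
  shows "(\<lambda>zs i. \<phi> (zs i)) \<in> PiM UNIV (\<lambda>_. M) \<rightarrow>\<^sub>M PiM UNIV (\<lambda>_. N)"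
  using assms by (intro measurable_PiM_single') (auto simp: space_PiM PiE_iff intro: measurable_space)

lemma nn_integral_PiM_truncate_seq_Suc:
  assumes D: "prob_space D" "sets D = sets borel"
    and [measurable]: "\<phi> \<in> borel \<rightarrow>\<^sub>M borel" "r \<in> borel_measurable borel"
      "H \<in> borel_measurable (PiM UNIV (\<lambda>_. borel))"
  shows "(\<integral>\<^sup>+zs. H (truncate_seq (Suc K) (\<lambda>i. \<phi> (zs i))) * (\<Prod>i<Suc K. r (zs i)) \<partial>PiM UNIV (\<lambda>_. D))
       = (\<integral>\<^sup>+s. (\<integral>\<^sup>+w. H (case_nat (\<phi> s) (truncate_seq K (\<lambda>i. \<phi> (w i)))) * (\<Prod>i<K. r (w i))
           \<partial>PiM UNIV (\<lambda>_. D)) * r s \<partial>D)"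
proof -
  have sets_P: "sets (PiM UNIV (\<lambda>_. D)) = sets (PiM UNIV (\<lambda>_. borel))"
    using D by (auto intro!: sets_PiM_cong)
  have [measurable]: "(\<lambda>zs i. \<phi> (zs i)) \<in> PiM UNIV (\<lambda>_. borel) \<rightarrow>\<^sub>M PiM UNIV (\<lambda>_. borel)"
    by (rule measurable_PiM_map_coordinates) simp
  have [measurable]: "(\<lambda>zs. \<Prod>i<n. r (zs i)) \<in> borel_measurable (PiM UNIV (\<lambda>_. borel))" for n
    by measurable
  have case_nat_map: "(\<lambda>i. \<phi> (case_nat s w i)) = case_nat (\<phi> s) (\<lambda>i. \<phi> (w i))" for s w
    by (auto simp: fun_eq_iff split: nat.split)
  have "(\<integral>\<^sup>+zs. H (truncate_seq (Suc K) (\<lambda>i. \<phi> (zs i))) * (\<Prod>i<Suc K. r (zs i)) \<partial>PiM UNIV (\<lambda>_. D))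
      = (\<integral>\<^sup>+s. \<integral>\<^sup>+w. H (case_nat (\<phi> s) (truncate_seq K (\<lambda>i. \<phi> (w i)))) * (\<Prod>i<K. r (w i)) * r s
           \<partial>PiM UNIV (\<lambda>_. D) \<partial>D)"
    by (subst nn_integral_PiM_case_nat, rule D, unfold measurable_cong_sets[OF sets_P refl], measurable)
      (simp add: case_nat_map truncate_seq_Suc prod.lessThan_Suc_shift mult_ac del: prod.lessThan_Suc)
  also have "\<dots> = (\<integral>\<^sup>+s. (\<integral>\<^sup>+w. H (case_nat (\<phi> s) (truncate_seq K (\<lambda>i. \<phi> (w i)))) * (\<Prod>i<K. r (w i))
      \<partial>PiM UNIV (\<lambda>_. D)) * r s \<partial>D)"
    by (intro nn_integral_cong nn_integral_multc, unfold measurable_cong_sets[OF sets_P refl]) measurable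
  finally show ?thesis .
qed

text \<open>With \<open>r = 1\<close> this transports a law-preserving map \<open>\<phi>\<close>, with \<open>\<phi> = id\<close> a density \<open>r\<close>,
  to the first \<open>K\<close> coordinates of an i.i.d. sequence.\<close>

lemma nn_integral_PiM_truncate_seq_transfer:
  assumes D: "prob_space D" "sets D = sets borel" and D': "prob_space D'" "sets D' = sets borel"
    and [measurable]: "\<phi> \<in> borel \<rightarrow>\<^sub>M borel" "r \<in> borel_measurable borel"
    and transfer: "\<And>h. h \<in> borel_measurable borel \<Longrightarrow>
        (\<integral>\<^sup>+z. h (\<phi> z) * r z \<partial>D) = (\<integral>\<^sup>+z. h z \<partial>D')"
    and "H \<in> borel_measurable (PiM UNIV (\<lambda>_. borel))"
  shows "(\<integral>\<^sup>+zs. H (truncate_seq K (\<lambda>i. \<phi> (zs i))) * (\<Prod>i<K. r (zs i)) \<partial>PiM UNIV (\<lambda>_. D))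
       = (\<integral>\<^sup>+zs. H (truncate_seq K zs) \<partial>PiM UNIV (\<lambda>_. D'))"
  using \<open>H \<in> _\<close>
proof (induction K arbitrary: H)
  case 0
  interpret P: prob_space "PiM UNIV (\<lambda>_. D)" by (intro prob_space_PiM D)
  interpret P': prob_space "PiM UNIV (\<lambda>_. D')" by (intro prob_space_PiM D')
  show ?case by (simp add: truncate_seq_def P.emeasure_space_1 P'.emeasure_space_1)
next
  case (Suc K)
  note [measurable] = Suc.prems
  interpret P': prob_space "PiM UNIV (\<lambda>_. D')" by (intro prob_space_PiM D')
  have sets_P': "sets (PiM UNIV (\<lambda>_. D')) = sets (PiM UNIV (\<lambda>_. borel))"
    using D' by (auto intro!: sets_PiM_cong)
  define g where "g a = (\<integral>\<^sup>+w. H (case_nat a (truncate_seq K w)) \<partial>PiM UNIV (\<lambda>_. D'))" for a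
  have "(\<lambda>(a, w). H (case_nat a (truncate_seq K w))) \<in> borel_measurable (borel \<Otimes>\<^sub>M PiM UNIV (\<lambda>_. D'))"
    unfolding measurable_cong_sets[OF sets_pair_measure_cong[OF refl sets_P'] refl] by measurable
  then have "g \<in> borel_measurable borel"
    unfolding g_def by (rule P'.borel_measurable_nn_integral)
  have "(\<integral>\<^sup>+zs. H (truncate_seq (Suc K) (\<lambda>i. \<phi> (zs i))) * (\<Prod>i<Suc K. r (zs i)) \<partial>PiM UNIV (\<lambda>_. D))
      = (\<integral>\<^sup>+s. g (\<phi> s) * r s \<partial>D)"
    unfolding nn_integral_PiM_truncate_seq_Suc[OF D \<open>\<phi> \<in> _\<close> \<open>r \<in> _\<close> Suc.prems]
  proof (intro nn_integral_cong)
    fix s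
    have "(\<lambda>w. H (case_nat (\<phi> s) w)) \<in> borel_measurable (PiM UNIV (\<lambda>_. borel))" by measurable
    from Suc.IH[OF this] show "(\<integral>\<^sup>+w. H (case_nat (\<phi> s) (truncate_seq K (\<lambda>i. \<phi> (w i))))
        * (\<Prod>i<K. r (w i)) \<partial>PiM UNIV (\<lambda>_. D)) * r s = g (\<phi> s) * r s"
      by (simp add: g_def)
  qed
  also have "\<dots> = (\<integral>\<^sup>+a. g a \<partial>D')" by (rule transfer) fact
  also have "\<dots> = (\<integral>\<^sup>+zs. H (truncate_seq (Suc K) zs) \<partial>PiM UNIV (\<lambda>_. D'))"
    unfolding g_def
    by (subst nn_integral_PiM_case_nat, rule D', unfold measurable_cong_sets[OF sets_P' refl], measurable)
      (simp add: truncate_seq_Suc)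
  finally show ?case .
qed

section \<open>Bernoulli losses\<close>

definition bernoulli_loss :: "real \<Rightarrow> real measure" where
  "bernoulli_loss p = distr (measure_pmf (bernoulli_pmf p)) borel of_bool"

lemma sets_bernoulli_loss [simp]: "sets (bernoulli_loss p) = sets borel"
  by (simp add: bernoulli_loss_def)

lemma prob_space_bernoulli_loss: "prob_space (bernoulli_loss p)"
  unfolding bernoulli_loss_def by (intro measure_pmf.prob_space_distr) auto

lemma nn_integral_bernoulli_loss:
  assumes "0 \<le> p" "p \<le> 1" "h \<in> borel_measurable borel"
  shows "(\<integral>\<^sup>+z. h z \<partial>bernoulli_loss p) = h 1 * ennreal p + h 0 * ennreal (1 - p)"
  using assms unfolding bernoulli_loss_def by (subst nn_integral_distr) auto

lemma risk_bernoulli_loss: "0 \<le> p \<Longrightarrow> p \<le> 1 \<Longrightarrow> risk (bernoulli_loss p) = p"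
  unfolding bernoulli_loss_def risk_def by (subst integral_distr) auto

lemma loss_dist_bernoulli_loss: "0 \<le> p \<Longrightarrow> p \<le> 1 \<Longrightarrow> loss_dist (bernoulli_loss p)"
  unfolding loss_dist_def bernoulli_loss_def
  by (auto simp: AE_distr_iff intro: measure_pmf.prob_space_distr)

lemma nn_integral_bernoulli_loss_tilt:
  assumes "0 \<le> l" "l \<le> 1" "h \<in> borel_measurable borel"
  shows "(\<integral>\<^sup>+z. h z * ennreal (if z = 1 then 1 + l else 1 - l) \<partial>bernoulli_loss (1/2))
       = (\<integral>\<^sup>+z. h z \<partial>bernoulli_loss ((1 + l) / 2))"
proof -
  have "ennreal (1 + l) * ennreal (1/2) = ennreal ((1 + l) / 2)"
    and "ennreal (1 - l) * ennreal (1 - 1/2) = ennreal (1 - (1 + l) / 2)"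
    using assms by (subst ennreal_mult[symmetric]; simp add: field_simps)+
  with assms show ?thesis
    by (simp add: nn_integral_bernoulli_loss mult.assoc del: ennreal_half)
qed

lemma nn_integral_bernoulli_loss_flip:
  assumes "h \<in> borel_measurable borel"
  shows "(\<integral>\<^sup>+z. h (if z = 1 then 0 else 1) \<partial>bernoulli_loss (1/2)) = (\<integral>\<^sup>+z. h z \<partial>bernoulli_loss (1/2))"
  using assms by (simp add: nn_integral_bernoulli_loss add.commute)

definition majority_ones :: "nat \<Rightarrow> (nat \<Rightarrow> real) set" where
  "majority_ones K = {zs. K \<le> 2 * card {i \<in> {..<K}. zs i = 1}}"

lemma truncate_seq_in_majority_ones_iff [simp]:
  "truncate_seq K zs \<in> majority_ones K \<longleftrightarrow> zs \<in> majority_ones K"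
proof -
  have "{i \<in> {..<K}. truncate_seq K zs i = 1} = {i \<in> {..<K}. zs i = 1}"
    by (auto simp: truncate_seq_def)
  then show ?thesis by (simp add: majority_ones_def)
qed

lemma majority_ones_sets [measurable]: "majority_ones K \<in> sets (PiM UNIV (\<lambda>_. borel))"
proof -
  have "card {i \<in> {..<K}. zs i = 1} = (\<Sum>i<K. of_bool (zs i = 1))" for zs :: "nat \<Rightarrow> real"
    using sum.inter_filter[of "{..<K}" "\<lambda>_. 1::nat" "\<lambda>i. zs i = 1"] by (simp add: of_bool_def)
  then have "majority_ones K = {zs \<in> space (PiM UNIV (\<lambda>_. borel)). K \<le> 2 * (\<Sum>i<K. of_bool (zs i = (1::real)))}"
    by (simp add: majority_ones_def space_PiM)
  also have "\<dots> \<in> sets (PiM UNIV (\<lambda>_. borel))" by measurable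
  finally show ?thesis .
qed

lemma prod_tilt_ge_on_majority_ones:
  fixes l :: real
  assumes l: "0 \<le> l" "l \<le> 1" and "zs \<in> majority_ones K"
  shows "(1 - l^2)^K \<le> (\<Prod>i<K. if zs i = 1 then 1 + l else 1 - l)"
proof -
  define S where "S = {i \<in> {..<K}. zs i = 1}"
  have "card S \<le> K" and "K \<le> 2 * card S"
    using card_mono[of "{..<K}" S] \<open>zs \<in> majority_ones K\<close> by (auto simp: S_def majority_ones_def)
  have "(1 - l^2)^K \<le> (1 - l^2)^(K - card S)"
    using l by (intro power_decreasing) (auto simp: power_le_one)
  also have "\<dots> = (1 + l)^(K - card S) * (1 - l)^(K - card S)"
    by (simp add: power_mult_distrib[symmetric] power2_eq_square algebra_simps)
  also have "\<dots> \<le> (1 + l)^card S * (1 - l)^(K - card S)"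
    using l \<open>K \<le> 2 * card S\<close> by (intro mult_right_mono power_increasing) auto
  also have "\<dots> = (\<Prod>i<K. if zs i = 1 then 1 + l else 1 - l)"
  proof -
    have "{..<K} \<inter> {i. zs i = 1} = S" and "{..<K} \<inter> - {i. zs i = 1} = {..<K} - S"
      by (auto simp: S_def)
    moreover have "card ({..<K} - S) = K - card S"
      by (subst card_Diff_subset) (auto simp: S_def)
    ultimately show ?thesis by (simp add: prod.If_cases)
  qed
  finally show ?thesis .
qed

lemma majority_ones_or_flipped:
  "zs \<in> majority_ones K \<or> (\<lambda>i. if zs i = 1 then 0 else 1) \<in> majority_ones K"
proof -
  have "{i \<in> {..<K}. (if zs i = 1 then 0 else 1 :: real) = 1} = {..<K} - {i \<in> {..<K}. zs i = 1}"
    by auto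
  also have "card \<dots> = K - card {i \<in> {..<K}. zs i = 1}"
    by (subst card_Diff_subset) auto
  finally show ?thesis by (auto simp: majority_ones_def)
qed

lemma measure_majority_ones_ge_half:
  "1/2 \<le> measure (PiM UNIV (\<lambda>_. bernoulli_loss (1/2))) (majority_ones K)"
proof -
  define P where "P = PiM UNIV (\<lambda>_::nat. bernoulli_loss (1/2))"
  define flip :: "real \<Rightarrow> real" where "flip z = (if z = 1 then 0 else 1)" for z
  define B where "B = majority_ones K"
  interpret P: prob_space P unfolding P_def by (intro prob_space_PiM prob_space_bernoulli_loss)
  have sets_P: "sets P = sets (PiM UNIV (\<lambda>_. borel))"
    unfolding P_def by (intro sets_PiM_cong) auto
  have [measurable]: "flip \<in> borel_measurable borel" unfolding flip_def by measurable
  have [measurable]: "(\<lambda>zs i. flip (zs i)) \<in> PiM UNIV (\<lambda>_. borel) \<rightarrow>\<^sub>M PiM UNIV (\<lambda>_. borel)"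
    by (rule measurable_PiM_map_coordinates) simp
  have flip_B: "(\<integral>\<^sup>+zs. indicator B (truncate_seq K (\<lambda>i. flip (zs i))) \<partial>P) = emeasure P B"
  proof -
    have "(\<integral>\<^sup>+zs. indicator B (truncate_seq K (\<lambda>i. flip (zs i))) * (\<Prod>i<K. 1) \<partial>P)
        = (\<integral>\<^sup>+zs. indicator B (truncate_seq K zs) \<partial>P)"
      unfolding P_def flip_def
      by (rule nn_integral_PiM_truncate_seq_transfer)
        (auto simp: prob_space_bernoulli_loss nn_integral_bernoulli_loss_flip B_def)
    also have "\<dots> = (\<integral>\<^sup>+zs. indicator B zs \<partial>P)"
      by (simp add: B_def indicator_def)
    finally show ?thesis using sets_P by (simp add: B_def)
  qed
  have "1 \<le> indicator B zs + (indicator B (truncate_seq K (\<lambda>i. flip (zs i))) :: ennreal)" for zs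
    using majority_ones_or_flipped[of zs K] by (auto simp: B_def flip_def)
  then have "1 \<le> (\<integral>\<^sup>+zs. indicator B zs + indicator B (truncate_seq K (\<lambda>i. flip (zs i))) \<partial>P)"
    using nn_integral_mono[of P "\<lambda>_. 1"] by (simp add: P.emeasure_space_1)
  also have "\<dots> = emeasure P B + emeasure P B"
    using sets_P by (subst nn_integral_add) (simp_all add: flip_B, simp_all add: B_def)
  finally have "1 \<le> 2 * measure P B"
    by (simp add: P.emeasure_eq_measure flip: ennreal_plus)
  then show ?thesis by (simp add: P_def B_def)
qed

lemma emeasure_PiM_bernoulli_tilt:
  assumes l: "0 \<le> l" "l \<le> 1" and H: "H \<in> sets (PiM UNIV (\<lambda>_. borel))"
    and H_trunc: "\<And>zs. truncate_seq K zs \<in> H \<longleftrightarrow> zs \<in> H"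
  shows "ennreal ((1 - l^2)^K) * emeasure (PiM UNIV (\<lambda>_. bernoulli_loss (1/2))) (H \<inter> majority_ones K)
       \<le> emeasure (PiM UNIV (\<lambda>_. bernoulli_loss ((1 + l) / 2))) H"
proof -
  define P1 where "P1 = PiM UNIV (\<lambda>_::nat. bernoulli_loss (1/2))"
  define P2 where "P2 = PiM UNIV (\<lambda>_::nat. bernoulli_loss ((1 + l) / 2))"
  define tilt where "tilt z = ennreal (if z = 1 then 1 + l else 1 - l)" for z :: real
  have sets_P1: "sets P1 = sets (PiM UNIV (\<lambda>_. borel))"
    and sets_P2: "sets P2 = sets (PiM UNIV (\<lambda>_. borel))"
    unfolding P1_def P2_def by (auto intro!: sets_PiM_cong)
  have [measurable]: "tilt \<in> borel_measurable borel" unfolding tilt_def by measurable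
  have likelihood: "ennreal ((1 - l^2)^K) \<le> (\<Prod>i<K. tilt (zs i))" if "zs \<in> majority_ones K" for zs
    using prod_tilt_ge_on_majority_ones[OF l that] l
    by (simp add: tilt_def prod_ennreal ennreal_leI)
  have "ennreal ((1 - l^2)^K) * emeasure P1 (H \<inter> majority_ones K)
      = (\<integral>\<^sup>+zs. ennreal ((1 - l^2)^K) * indicator (H \<inter> majority_ones K) zs \<partial>P1)"
    using H sets_P1 by (simp add: nn_integral_cmult_indicator)
  also have "\<dots> \<le> (\<integral>\<^sup>+zs. indicator H (truncate_seq K zs) * (\<Prod>i<K. tilt (zs i)) \<partial>P1)"
    by (intro nn_integral_mono) (auto simp: H_trunc likelihood split: split_indicator)
  also have "\<dots> = (\<integral>\<^sup>+zs. indicator H (truncate_seq K zs) \<partial>P2)"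
    using nn_integral_PiM_truncate_seq_transfer[where \<phi> = "\<lambda>z. z" and r = tilt and H = "indicator H"]
      H l by (simp add: P1_def P2_def tilt_def prob_space_bernoulli_loss nn_integral_bernoulli_loss_tilt)
  also have "\<dots> = (\<integral>\<^sup>+zs. indicator H zs \<partial>P2)"
    by (simp add: H_trunc indicator_def)
  also have "\<dots> = emeasure P2 H"
    using H sets_P2 by simp
  finally show ?thesis unfolding P1_def P2_def .
qed

section \<open>Stopping events of online algorithms\<close>

lemma sets_sample_space:
  "sets D = sets borel \<Longrightarrow> sets (sample_space D) = sets (borel \<Otimes>\<^sub>M PiM UNIV (\<lambda>_. borel))"
  unfolding sample_space_def by (intro sets_pair_measure_cong) (auto intro!: sets_PiM_cong)

lemma prob_space_sample_space: "prob_space D \<Longrightarrow> prob_space (sample_space D)"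
  unfolding sample_space_def
  by (intro prob_space_pair prob_space_PiM prob_space_uniform_measure) auto

lemma measure_sample_space_UNIV_Times:
  assumes D: "prob_space D" "sets D = sets borel" and E: "E \<in> sets (PiM UNIV (\<lambda>_. borel))"
  shows "measure (sample_space D) (UNIV \<times> E) = measure (PiM UNIV (\<lambda>_. D)) E"
proof -
  interpret U: prob_space "uniform_measure lborel {0..1::real}"
    by (intro prob_space_uniform_measure) auto
  interpret P: prob_space "PiM UNIV (\<lambda>_::nat. D)" by (intro prob_space_PiM D)
  have "E \<in> sets (PiM UNIV (\<lambda>_. D))" using E D by (simp cong: sets_PiM_cong)
  then show ?thesis
    unfolding sample_space_def measure_def
    by (simp add: P.emeasure_pair_measure_Times U.emeasure_space_1[simplified])
qed

lemma measurable_rad_est: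
  assumes "online_alg A"
  shows "(\<lambda>x. rad A (fst x) (snd x) k) \<in> borel_measurable (borel \<Otimes>\<^sub>M PiM UNIV (\<lambda>_. borel))"
    and "(\<lambda>x. est A (fst x) (snd x) k) \<in> borel_measurable (borel \<Otimes>\<^sub>M PiM UNIV (\<lambda>_. borel))"
proof -
  have "(\<lambda>x. A (fst x) (map (snd x) [0..<k])) \<in> borel \<Otimes>\<^sub>M PiM UNIV (\<lambda>_. borel) \<rightarrow>\<^sub>M borel \<Otimes>\<^sub>M borel"
    using assms unfolding online_alg_def by (simp add: split_beta' borel_prod)
  then show "(\<lambda>x. rad A (fst x) (snd x) k) \<in> borel_measurable (borel \<Otimes>\<^sub>M PiM UNIV (\<lambda>_. borel))"
    and "(\<lambda>x. est A (fst x) (snd x) k) \<in> borel_measurable (borel \<Otimes>\<^sub>M PiM UNIV (\<lambda>_. borel))"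
    unfolding rad_def est_def by measurable
qed

lemma sets_failure_event:
  assumes "online_alg A"
  shows "failure_event A R n eps \<in> sets (borel \<Otimes>\<^sub>M PiM UNIV (\<lambda>_. borel))"
proof -
  note [measurable] = measurable_rad_est[OF assms]
  have "failure_event A R n eps = {x \<in> space (borel \<Otimes>\<^sub>M PiM UNIV (\<lambda>_. borel)).
      (\<forall>k::nat. 1 \<le> k \<and> real k < n \<longrightarrow> rad A (fst x) (snd x) k > eps)
      \<or> (\<exists>k::nat. 1 \<le> k \<and> (\<forall>j. 1 \<le> j \<and> j < k \<longrightarrow> rad A (fst x) (snd x) j > eps)
         \<and> \<not> (est A (fst x) (snd x) k - rad A (fst x) (snd x) k \<le> R
              \<and> R \<le> est A (fst x) (snd x) k + rad A (fst x) (snd x) k))}"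
    by (auto simp: failure_event_def space_pair_measure space_PiM)
  also have "\<dots> \<in> sets (borel \<Otimes>\<^sub>M PiM UNIV (\<lambda>_. borel))" by measurable
  finally show ?thesis .
qed

definition stops_covering :: "alg \<Rightarrow> real \<Rightarrow> real \<Rightarrow> real \<Rightarrow> (real \<times> (nat \<Rightarrow> real)) set" where
  "stops_covering A n eps c = {(u, zs). \<exists>k::nat. 1 \<le> k \<and> real k < n \<and> rad A u zs k \<le> eps
      \<and> (\<forall>j. 1 \<le> j \<and> j < k \<longrightarrow> eps < rad A u zs j) \<and> \<bar>est A u zs k - c\<bar> \<le> rad A u zs k}"

lemma sets_stops_covering:
  assumes "online_alg A"
  shows "stops_covering A n eps c \<in> sets (borel \<Otimes>\<^sub>M PiM UNIV (\<lambda>_. borel))"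
proof -
  note [measurable] = measurable_rad_est[OF assms]
  have "stops_covering A n eps c = {x \<in> space (borel \<Otimes>\<^sub>M PiM UNIV (\<lambda>_. borel)).
      \<exists>k::nat. 1 \<le> k \<and> real k < n \<and> rad A (fst x) (snd x) k \<le> eps
      \<and> (\<forall>j. 1 \<le> j \<and> j < k \<longrightarrow> eps < rad A (fst x) (snd x) j)
      \<and> \<bar>est A (fst x) (snd x) k - c\<bar> \<le> rad A (fst x) (snd x) k}"
    by (auto simp: stops_covering_def space_pair_measure space_PiM)
  also have "\<dots> \<in> sets (borel \<Otimes>\<^sub>M PiM UNIV (\<lambda>_. borel))" by measurable
  finally show ?thesis .
qed

lemma compl_stops_covering_subset_failure_event:
  "- stops_covering A n eps R \<subseteq> failure_event A R n eps"
proof -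
  have "(u, zs) \<in> stops_covering A n eps R" if not_fail: "(u, zs) \<notin> failure_event A R n eps" for u zs
  proof -
    from not_fail have "\<exists>k::nat. 1 \<le> k \<and> real k < n \<and> rad A u zs k \<le> eps"
      unfolding failure_event_def by force
    from exists_least_iff[THEN iffD1, OF this] obtain k where
      k: "1 \<le> k" "real k < n" "rad A u zs k \<le> eps"
      and below: "\<And>j. j < k \<Longrightarrow> \<not> (1 \<le> j \<and> real j < n \<and> rad A u zs j \<le> eps)"
      by blast
    have earlier: "\<forall>j. 1 \<le> j \<and> j < k \<longrightarrow> eps < rad A u zs j"
      using below k(2) by force
    with not_fail k(1) have "est A u zs k - rad A u zs k \<le> R \<and> R \<le> est A u zs k + rad A u zs k"
      unfolding failure_event_def by blast
    then have "\<bar>est A u zs k - R\<bar> \<le> rad A u zs k" by (simp add: abs_le_iff)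
    with k earlier show ?thesis
      unfolding stops_covering_def by blast
  qed
  then show ?thesis by auto
qed

lemma stops_covering_subset_failure_event:
  assumes "2 * eps < \<bar>R - c\<bar>"
  shows "stops_covering A n eps c \<subseteq> failure_event A R n' eps"
proof (safe)
  fix u zs assume "(u, zs) \<in> stops_covering A n eps c"
  then obtain k where k: "1 \<le> k" "rad A u zs k \<le> eps" "\<forall>j. 1 \<le> j \<and> j < k \<longrightarrow> eps < rad A u zs j"
    and covers: "\<bar>est A u zs k - c\<bar> \<le> rad A u zs k"
    unfolding stops_covering_def by blast
  have "\<not> (est A u zs k - rad A u zs k \<le> R \<and> R \<le> est A u zs k + rad A u zs k)"
    using assms k(2) covers by (auto simp: abs_le_iff abs_real_def split: if_splits)
  with k show "(u, zs) \<in> failure_event A R n' eps"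
    unfolding failure_event_def by blast
qed

lemma stops_covering_truncate_seq_iff:
  assumes "n \<le> real K"
  shows "(u, truncate_seq K zs) \<in> stops_covering A n eps c \<longleftrightarrow> (u, zs) \<in> stops_covering A n eps c"
proof -
  have iff: "(1 \<le> k \<and> real k < n \<and> rad A u (truncate_seq K zs) k \<le> eps
      \<and> (\<forall>j. 1 \<le> j \<and> j < k \<longrightarrow> eps < rad A u (truncate_seq K zs) j)
      \<and> \<bar>est A u (truncate_seq K zs) k - c\<bar> \<le> rad A u (truncate_seq K zs) k)
    \<longleftrightarrow> (1 \<le> k \<and> real k < n \<and> rad A u zs k \<le> eps
      \<and> (\<forall>j. 1 \<le> j \<and> j < k \<longrightarrow> eps < rad A u zs j) \<and> \<bar>est A u zs k - c\<bar> \<le> rad A u zs k)" for k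
  proof (cases "real k < n")
    case True
    have "j \<le> K" if "j \<le> k" for j
      using True assms that by linarith
    then have "rad A u (truncate_seq K zs) j = rad A u zs j \<and> est A u (truncate_seq K zs) j = est A u zs j"
      if "j \<le> k" for j
      using that unfolding rad_def est_def by (metis map_truncate_seq)
    then show ?thesis by (metis less_imp_le order_refl)
  qed auto
  show ?thesis unfolding stops_covering_def by (simp only: mem_Collect_eq prod.case iff)
qed

section \<open>Lower bound by change of measure\<close>

lemma emeasure_sample_space_bernoulli_tilt:
  assumes l: "0 \<le> l" "l \<le> 1" and G: "G \<in> sets (borel \<Otimes>\<^sub>M PiM UNIV (\<lambda>_. borel))"
    and G_trunc: "\<And>u zs. (u, truncate_seq K zs) \<in> G \<longleftrightarrow> (u, zs) \<in> G"
  shows "ennreal ((1 - l^2)^K) * emeasure (sample_space (bernoulli_loss (1/2))) (G \<inter> (UNIV \<times> majority_ones K))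
       \<le> emeasure (sample_space (bernoulli_loss ((1 + l) / 2))) G"
  unfolding sample_space_def
proof (rule emeasure_pair_measure_mono_sections)
  show "sigma_finite_measure (PiM UNIV (\<lambda>_::nat. bernoulli_loss (1/2)))"
    and "sigma_finite_measure (PiM UNIV (\<lambda>_::nat. bernoulli_loss ((1 + l) / 2)))"
    by (intro prob_space_imp_sigma_finite prob_space_PiM prob_space_bernoulli_loss)+
  show "G \<inter> (UNIV \<times> majority_ones K)
      \<in> sets (uniform_measure lborel {0..1} \<Otimes>\<^sub>M PiM UNIV (\<lambda>_. bernoulli_loss (1/2)))"
    and "G \<in> sets (uniform_measure lborel {0..1} \<Otimes>\<^sub>M PiM UNIV (\<lambda>_. bernoulli_loss ((1 + l) / 2)))"
    using G sets_sample_space[of "bernoulli_loss _"] by (simp_all add: sample_space_def)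
  fix u
  have "Pair u -` G \<in> sets (PiM UNIV (\<lambda>_. borel))" using G by (rule sets_Pair1)
  with l have "ennreal ((1 - l^2)^K) * emeasure (PiM UNIV (\<lambda>_. bernoulli_loss (1/2))) (Pair u -` G \<inter> majority_ones K)
      \<le> emeasure (PiM UNIV (\<lambda>_. bernoulli_loss ((1 + l) / 2))) (Pair u -` G)"
    by (rule emeasure_PiM_bernoulli_tilt) (simp add: G_trunc)
  moreover have "Pair u -` (G \<inter> (UNIV \<times> majority_ones K)) = Pair u -` G \<inter> majority_ones K" by auto
  ultimately show "ennreal ((1 - l^2)^K) * emeasure (PiM UNIV (\<lambda>_. bernoulli_loss (1/2)))
        (Pair u -` (G \<inter> (UNIV \<times> majority_ones K)))
      \<le> emeasure (PiM UNIV (\<lambda>_. bernoulli_loss ((1 + l) / 2))) (Pair u -` G)"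
    by simp
qed

lemma measure_stops_covering_tilt:
  assumes A: "online_alg A" and l: "0 \<le> l" "l \<le> 1" and K: "n \<le> real K"
  shows "(1 - l^2)^K * (1/2 - measure (sample_space (bernoulli_loss (1/2))) (- stops_covering A n eps c))
       \<le> measure (sample_space (bernoulli_loss ((1 + l) / 2))) (stops_covering A n eps c)"
proof -
  define G where "G = stops_covering A n eps c"
  define B where "B = majority_ones K"
  define SS1 where "SS1 = sample_space (bernoulli_loss (1/2))"
  define SS2 where "SS2 = sample_space (bernoulli_loss ((1 + l) / 2))"
  interpret SS1: prob_space SS1
    unfolding SS1_def by (intro prob_space_sample_space prob_space_bernoulli_loss)
  interpret SS2: prob_space SS2
    unfolding SS2_def by (intro prob_space_sample_space prob_space_bernoulli_loss)
  have G: "G \<in> sets (borel \<Otimes>\<^sub>M PiM UNIV (\<lambda>_. borel))"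
    unfolding G_def using A by (rule sets_stops_covering)
  have sets_SS1: "sets SS1 = sets (borel \<Otimes>\<^sub>M PiM UNIV (\<lambda>_. borel))"
    unfolding SS1_def by (simp add: sets_sample_space)
  have GB: "G \<inter> (UNIV \<times> B) \<in> sets SS1"
    using G sets_SS1 by (simp add: B_def)
  have "ennreal ((1 - l^2)^K) * emeasure SS1 (G \<inter> (UNIV \<times> B)) \<le> emeasure SS2 G"
    unfolding SS1_def SS2_def B_def G_def
    by (intro emeasure_sample_space_bernoulli_tilt l sets_stops_covering A stops_covering_truncate_seq_iff K)
  then have tilted: "(1 - l^2)^K * measure SS1 (G \<inter> (UNIV \<times> B)) \<le> measure SS2 G"
    using l by (simp add: SS1.emeasure_eq_measure SS2.emeasure_eq_measure power_le_one
        flip: ennreal_mult)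
  have "1/2 \<le> measure SS1 (UNIV \<times> B)"
    using measure_majority_ones_ge_half[of K] measure_sample_space_UNIV_Times[of "bernoulli_loss (1/2)" B]
    by (simp add: SS1_def B_def prob_space_bernoulli_loss)
  also have "\<dots> \<le> measure SS1 (G \<inter> (UNIV \<times> B)) + measure SS1 (- G)"
  proof -
    have "- G \<in> sets SS1"
      using G sets_SS1 sets.compl_sets[of G SS1] sets_eq_imp_space_eq[OF sets_SS1]
      by (simp add: space_pair_measure space_PiM Compl_eq_Diff_UNIV)
    with GB show ?thesis
      by (intro order.trans[OF SS1.finite_measure_mono measure_Un_le]) auto
  qed
  finally have "(1 - l^2)^K * (1/2 - measure SS1 (- G)) \<le> (1 - l^2)^K * measure SS1 (G \<inter> (UNIV \<times> B))"
    using l by (intro mult_left_mono) (auto simp: power_le_one)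
  with tilted show ?thesis unfolding SS1_def SS2_def G_def by linarith
qed

lemma eps_less_tilted_power:
  fixes e n :: real
  assumes e: "0 < e" "e \<le> 1/100" and n: "n * e^2 \<le> ln (1/e) / 144"
  shows "e < (1 - (6 * e)^2)^(nat \<lceil>n\<rceil>) * (1/2 - e)"
proof -
  define K where "K = nat \<lceil>n\<rceil>"
  define x where "x = 36 * e^2"
  have "e^2 \<le> 1/10000" using mult_mono[of e "1/100" e "1/100"] e by (simp add: power2_eq_square)
  then have x: "0 \<le> x" "x \<le> 1/2" and small: "72 * e^2 \<le> 1/100" by (auto simp: x_def)
  have "-x - 2 * x^2 \<le> ln (1 - x)" using ln_one_minus_pos_lower_bound[OF x] by simp
  moreover have "2 * x^2 \<le> x" using mult_right_mono[OF x(2) x(1)] by (simp add: power2_eq_square)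
  ultimately have ln_x: "-2 * x \<le> ln (1 - x)" by linarith
  have "real K \<le> max n 0 + 1" unfolding K_def by linarith
  moreover have "max n 0 * e^2 \<le> ln (1/e) / 144" using n e by (auto simp: max_def)
  ultimately have "real K * x \<le> ln (1/e) / 4 + 36 * e^2"
    using x by (auto simp: x_def algebra_simps intro: order.trans[OF mult_right_mono])
  then have "ln e / 2 - 72 * e^2 \<le> real K * ln (1 - x)"
    using mult_left_mono[OF ln_x, of "real K"] e by (simp add: ln_div)
  moreover have "(1 - x)^K = exp (real K * ln (1 - x))"
    using x by (simp add: exp_of_nat_mult)
  ultimately have "exp (ln e / 2) * exp (- 72 * e^2) \<le> (1 - x)^K"
    by (simp flip: exp_add)
  moreover have "exp (ln e / 2) = sqrt e"
    using e by (simp add: powr_half_sqrt[symmetric] powr_def)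
  moreover have "sqrt e * (99/100) \<le> sqrt e * exp (- 72 * e^2)"
    using exp_ge_add_one_self[of "- 72 * e^2"] small e by (intro mult_left_mono) auto
  ultimately have lower: "sqrt e * (99/100) \<le> (1 - x)^K" by simp
  have "sqrt e \<le> sqrt (1/100)" using e by simp
  also have "sqrt (1/100) = (1/10 :: real)" by (rule real_sqrt_unique) (simp_all add: power2_eq_square)
  finally have "sqrt e \<le> 1/10" .
  have "e = sqrt e * sqrt e" using e by simp
  also have "\<dots> \<le> sqrt e * (1/10)" using \<open>sqrt e \<le> 1/10\<close> e by (intro mult_left_mono) auto
  also have "\<dots> < sqrt e * (99/100 * (1/2 - e))" using e by (intro mult_strict_left_mono) auto
  also have "\<dots> \<le> (1 - x)^K * (1/2 - e)"
    unfolding mult.assoc[symmetric] by (rule mult_right_mono[OF lower]) (use e in simp)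
  finally show ?thesis by (simp add: x_def K_def power_mult_distrib)
qed

lemma certified_bernoulli_sample_size:
  assumes A: "online_alg A" and e: "0 < e" "e \<le> 1/100"
    and cert_half: "certified A (bernoulli_loss (1/2)) n e e"
    and cert_shifted: "certified A (bernoulli_loss (1/2 + 3 * e)) n' e e"
  shows "ln (1/e) / 144 < n * e^2"
proof (rule ccontr)
  assume "\<not> ?thesis"
  then have "e < (1 - (6 * e)^2)^nat \<lceil>n\<rceil> * (1/2 - e)"
    using e by (intro eps_less_tilted_power) auto
  define G where "G = stops_covering A n e (1/2)"
  define SS1 where "SS1 = sample_space (bernoulli_loss (1/2))"
  define SS2 where "SS2 = sample_space (bernoulli_loss (1/2 + 3 * e))"
  interpret SS1: prob_space SS1
    unfolding SS1_def by (intro prob_space_sample_space prob_space_bernoulli_loss)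
  interpret SS2: prob_space SS2
    unfolding SS2_def by (intro prob_space_sample_space prob_space_bernoulli_loss)
  have "measure SS1 (- G) \<le> measure SS1 (failure_event A (1/2) n e)"
    using sets_failure_event[OF A] unfolding G_def SS1_def
    by (intro SS1.finite_measure_mono[unfolded SS1_def] compl_stops_covering_subset_failure_event)
      (simp add: sets_sample_space)
  also have "\<dots> \<le> e"
    using cert_half by (simp add: certified_def risk_bernoulli_loss SS1_def)
  finally have "(1 - (6 * e)^2)^nat \<lceil>n\<rceil> * (1/2 - e)
      \<le> (1 - (6 * e)^2)^nat \<lceil>n\<rceil> * (1/2 - measure SS1 (- G))"
    using e abs_square_le_1[of "6 * e"] by (intro mult_left_mono zero_le_power) auto
  also have "\<dots> \<le> measure SS2 G"
    using measure_stops_covering_tilt[OF A, of "6 * e" n "nat \<lceil>n\<rceil>" e "1/2"] e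
    by (simp add: G_def SS1_def SS2_def add_divide_distrib real_nat_ceiling_ge)
  also have "\<dots> \<le> measure SS2 (failure_event A (1/2 + 3 * e) n' e)"
    using sets_failure_event[OF A] e unfolding G_def SS2_def
    by (intro SS2.finite_measure_mono[unfolded SS2_def] stops_covering_subset_failure_event)
      (simp_all add: sets_sample_space)
  also have "\<dots> \<le> e"
    using cert_shifted e by (simp add: certified_def risk_bernoulli_loss SS2_def)
  finally show False using \<open>e < _\<close> by simp
qed

lemma exists_small_diagonal_point:
  fixes N :: "real \<Rightarrow> real \<Rightarrow> real"
  assumes lim: "((\<lambda>(eps, \<delta>). N eps \<delta> * eps^2 / (ln (1/\<delta>) + ln (ln (1/eps)))) \<longlongrightarrow> 0)
      (at_right 0 \<times>\<^sub>F at_right 0)"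
    and "0 < b"
  shows "\<exists>e. 0 < e \<and> e < b \<and> N e e * e^2 \<le> ln (1/e) / 144"
proof -
  have "((\<lambda>e. N e e * e^2 / (ln (1/e) + ln (ln (1/e)))) \<longlongrightarrow> 0) (at_right 0)"
    using filterlim_compose[OF lim filterlim_Pair[OF filterlim_ident filterlim_ident]] by simp
  then have "eventually (\<lambda>e. \<bar>N e e * e^2 / (ln (1/e) + ln (ln (1/e)))\<bar> < 1/288) (at_right 0)"
    by (auto dest: tendstoD[of _ 0 _ "1/288"])
  moreover have "eventually (\<lambda>e. 0 < e \<and> e < b \<and> e < 1/3) (at_right (0::real))"
    using \<open>0 < b\<close> by (auto simp: eventually_at_right_field intro!: exI[of _ "min b (1/3)"])
  ultimately have "eventually (\<lambda>e. \<bar>N e e * e^2 / (ln (1/e) + ln (ln (1/e)))\<bar> < 1/288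
      \<and> 0 < e \<and> e < b \<and> e < 1/3) (at_right (0::real))"
    by (rule eventually_conj)
  from eventually_happens'[OF trivial_limit_at_right_real this] obtain e where e: "0 < e" "e < b" "e < 1/3"
    and close: "\<bar>N e e * e^2 / (ln (1/e) + ln (ln (1/e)))\<bar> < 1/288"
    by blast
  have "3 \<le> 1/e" using e by (simp add: field_simps)
  with exp_le have "exp 1 \<le> 1/e" by linarith
  then have log: "1 \<le> ln (1/e)"
    using ln_le_cancel_iff[of "exp 1" "1/e"] e by simp
  then have loglog: "0 \<le> ln (ln (1/e))" "ln (ln (1/e)) \<le> ln (1/e)"
    using ln_le_minus_one[of "ln (1/e)"] by auto
  have "N e e * e^2 / (ln (1/e) + ln (ln (1/e))) < 1/288"
    using close unfolding abs_less_iff by blast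
  then have "N e e * e^2 < (ln (1/e) + ln (ln (1/e))) / 288"
    using log loglog by (simp add: pos_divide_less_eq)
  also have "\<dots> \<le> ln (1/e) / 144"
    using loglog by simp
  finally show ?thesis using e by (intro exI[of _ e]) auto
qed

lemma no_certified_alg_below_rate:
  fixes n' :: "real \<Rightarrow> real \<Rightarrow> real measure \<Rightarrow> real" and A :: "real \<Rightarrow> real \<Rightarrow> alg"
  assumes lim: "\<forall>D. loss_dist D \<longrightarrow>
      ((\<lambda>(eps, \<delta>). n' eps \<delta> D * eps^2 / (ln (1/\<delta>) + ln (ln (1/eps)))) \<longlongrightarrow> 0)
        (at_right 0 \<times>\<^sub>F at_right 0)"
    and A: "\<And>eps \<delta>. online_alg (A eps \<delta>)" and "0 < eps0" "0 < \<delta>0"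
    and cert: "\<And>eps \<delta> D. 0 < eps \<Longrightarrow> eps < eps0 \<Longrightarrow> 0 < \<delta> \<Longrightarrow> \<delta> < \<delta>0 \<Longrightarrow> loss_dist D \<Longrightarrow>
      certified (A eps \<delta>) D (n' eps \<delta> D) eps \<delta>"
  shows False
proof -
  have "((\<lambda>(eps, \<delta>). n' eps \<delta> (bernoulli_loss (1/2)) * eps^2 / (ln (1/\<delta>) + ln (ln (1/eps))))
      \<longlongrightarrow> 0) (at_right 0 \<times>\<^sub>F at_right 0)"
    using lim loss_dist_bernoulli_loss[of "1/2"] by simp
  from exists_small_diagonal_point[OF this, of "min (min eps0 \<delta>0) (1/100)"]
  obtain e where e: "0 < e" "e < min (min eps0 \<delta>0) (1/100)"
    and small: "n' e e (bernoulli_loss (1/2)) * e^2 \<le> ln (1/e) / 144"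
    using \<open>0 < eps0\<close> \<open>0 < \<delta>0\<close> by auto
  have "ln (1/e) / 144 < n' e e (bernoulli_loss (1/2)) * e^2"
    using e by (intro certified_bernoulli_sample_size[OF A[of e e], where n' = "n' e e (bernoulli_loss (1/2 + 3 * e))"]
        cert loss_dist_bernoulli_loss) auto
  with small show False by simp
qed

section \<open>Upper bound by Hoeffding's inequality\<close>

lemma measure_PiM_mean_deviation_le:
  fixes m :: nat
  assumes D: "loss_dist D" and "1 \<le> m" "0 \<le> eps"
  shows "measure (PiM UNIV (\<lambda>_. D)) {zs. eps < \<bar>(\<Sum>i<m. zs i) / real m - risk D\<bar>}
       \<le> 2 * exp (-2 * real m * eps^2)"
proof -
  define P where "P = PiM UNIV (\<lambda>_::nat. D)"
  have D_prob: "prob_space D" "sets D = sets borel" and D_AE: "AE z in D. 0 \<le> z \<and> z \<le> 1"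
    using D by (auto simp: loss_dist_def)
  interpret P: prob_space P unfolding P_def by (intro prob_space_PiM D_prob)
  have sets_P: "sets P = sets (PiM UNIV (\<lambda>_. borel))"
    unfolding P_def using D_prob by (intro sets_PiM_cong) auto
  have [measurable]: "(\<lambda>zs. zs i) \<in> borel_measurable P" for i
    unfolding measurable_cong_sets[OF sets_P refl] by simp
  have coordinate: "distr P borel (\<lambda>zs. zs i) = D" for i
    unfolding P_def using D_prob by (rule distr_PiM_coordinate_borel)
  interpret Hoeffding_ineq_iid P "{..<m}" "\<lambda>i zs. zs i" "\<lambda>zs. zs 0" 0 1 "P.expectation (\<lambda>zs. zs 0)"
  proof unfold_locales
    show "P.indep_vars (\<lambda>_. borel) (\<lambda>i zs. zs i) {..<m}"
      using indep_vars_PiM_coordinates[OF D_prob] unfolding P_def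
      by (rule P.indep_vars_subset[unfolded P_def]) simp
    show "AE zs in P. zs 0 \<in> {0..1}"
      using D_AE unfolding coordinate[of 0, symmetric] by (simp add: AE_distr_iff)
  qed (simp_all add: coordinate)
  have "P.prob {zs \<in> space P. eps \<le> \<bar>(\<Sum>i\<in>{..<m}. zs i) / real (card {..<m}) - P.expectation (\<lambda>zs. zs 0)\<bar>}
      \<le> 2 * exp (-2 * real (card {..<m}) * eps^2 / (1 - 0)^2)"
    by (rule Hoeffding_ineq_abs_ge') (use assms in \<open>auto simp: lessThan_empty_iff\<close>)
  moreover have "P.expectation (\<lambda>zs. zs 0) = risk D"
    unfolding risk_def coordinate[of 0, symmetric] by (simp add: integral_distr)
  ultimately have "P.prob {zs \<in> space P. eps \<le> \<bar>(\<Sum>i<m. zs i) / m - risk D\<bar>}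
      \<le> 2 * exp (-2 * real m * eps^2)"
    by simp
  moreover have "{zs \<in> space P. eps \<le> \<bar>(\<Sum>i<m. zs i) / m - risk D\<bar>} \<in> P.events" by measurable
  moreover have "{zs. eps < \<bar>(\<Sum>i<m. zs i) / m - risk D\<bar>}
      \<subseteq> {zs \<in> space P. eps \<le> \<bar>(\<Sum>i<m. zs i) / m - risk D\<bar>}"
    using sets_eq_imp_space_eq[OF sets_P] by (auto simp: space_PiM)
  ultimately show ?thesis
    unfolding P_def[symmetric] by (meson P.finite_measure_mono order_trans)
qed

definition fixed_sample_alg :: "nat \<Rightarrow> real \<Rightarrow> alg" where
  "fixed_sample_alg m eps u zs =
     (if length zs < m then (1/2, 1) else (sum_list zs / real (length zs), eps))"

lemma sum_list_map_upt: "sum_list (map zs [0..<n]) = (\<Sum>i<n. zs i)"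
  by (simp add: interv_sum_list_conv_sum_set_nat atLeast0LessThan)

lemma rad_fixed_sample_alg [simp]: "rad (fixed_sample_alg m eps) u zs k = (if k < m then 1 else eps)"
  by (simp add: rad_def fixed_sample_alg_def)

lemma est_fixed_sample_alg [simp]:
  "est (fixed_sample_alg m eps) u zs k = (if k < m then 1/2 else (\<Sum>i<k. zs i) / real k)"
  by (simp add: est_def fixed_sample_alg_def sum_list_map_upt)

lemma online_alg_fixed_sample_alg: "online_alg (fixed_sample_alg m eps)"
  unfolding online_alg_def
proof
  fix k
  have "(\<lambda>(u, zs). fixed_sample_alg m eps u (map zs [0..<k]))
      = (\<lambda>x. if k < m then (1/2, 1) else ((\<Sum>i<k. snd x i) / real k, eps))"
    by (auto simp: fixed_sample_alg_def fun_eq_iff sum_list_map_upt)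
  also have "\<dots> \<in> borel \<Otimes>\<^sub>M PiM UNIV (\<lambda>_. borel) \<rightarrow>\<^sub>M borel \<Otimes>\<^sub>M borel" by measurable
  finally show "(\<lambda>(u, zs). fixed_sample_alg m eps u (map zs [0..<k])) \<in> borel \<Otimes>\<^sub>M PiM UNIV (\<lambda>_. borel) \<rightarrow>\<^sub>M borel"
    by (simp add: borel_prod)
qed

lemma failure_event_fixed_sample_alg_subset:
  assumes "1 \<le> m" "real m < n" "0 \<le> R" "R \<le> 1" "eps < 1"
  shows "failure_event (fixed_sample_alg m eps) R n eps
       \<subseteq> UNIV \<times> {zs. eps < \<bar>(\<Sum>i<m. zs i) / real m - R\<bar>}"
proof -
  have "eps < \<bar>(\<Sum>i<m. zs i) / real m - R\<bar>"
    if fail: "(u, zs) \<in> failure_event (fixed_sample_alg m eps) R n eps" for u zs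
  proof -
    have "\<not> (\<forall>k::nat. 1 \<le> k \<and> real k < n \<longrightarrow> eps < rad (fixed_sample_alg m eps) u zs k)"
      using assms by (auto intro!: exI[of _ m])
    with fail obtain k where "1 \<le> k"
      and earlier: "\<forall>j. 1 \<le> j \<and> j < k \<longrightarrow> eps < rad (fixed_sample_alg m eps) u zs j"
      and miss: "\<not> (est (fixed_sample_alg m eps) u zs k - rad (fixed_sample_alg m eps) u zs k \<le> R
          \<and> R \<le> est (fixed_sample_alg m eps) u zs k + rad (fixed_sample_alg m eps) u zs k)"
      unfolding failure_event_def by blast
    have "k = m"
      using earlier miss assms \<open>1 \<le> k\<close> by (cases k m rule: linorder_cases) auto
    with miss show ?thesis
      using assms by auto
  qed
  then show ?thesis by auto
qed

lemma risk_bounds: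
  assumes "loss_dist D"
  shows "0 \<le> risk D" "risk D \<le> 1"
proof -
  interpret prob_space D using assms by (simp add: loss_dist_def)
  have AE_bounds: "AE z in D. 0 \<le> z \<and> z \<le> 1" and "sets D = sets borel"
    using assms by (auto simp: loss_dist_def)
  have "AE z in D. norm z \<le> (1::real)"
    using AE_bounds by (rule eventually_mono) auto
  then have "integrable D (\<lambda>z::real. z)"
    by (rule integrable_const_bound) (simp add: measurable_cong_sets[OF \<open>sets D = _\<close> refl])
  moreover have "AE z in D. 0 \<le> z" "AE z in D. z \<le> 1"
    using AE_bounds by (auto elim: eventually_mono)
  ultimately show "0 \<le> risk D" "risk D \<le> 1"
    unfolding risk_def by (auto intro: integral_ge_const integral_le_const)
qed

lemma certified_fixed_sample_alg:
  assumes D: "loss_dist D" and m: "1 \<le> m" "real m < n" and eps: "0 \<le> eps" "eps < 1"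
    and \<delta>: "2 * exp (-2 * real m * eps^2) \<le> \<delta>"
  shows "certified (fixed_sample_alg m eps) D n eps \<delta>"
proof -
  have D_prob: "prob_space D" "sets D = sets borel" using D by (auto simp: loss_dist_def)
  interpret SS: prob_space "sample_space D" by (intro prob_space_sample_space D_prob)
  define E where "E = {zs. eps < \<bar>(\<Sum>i<m. zs i) / real m - risk D\<bar>}"
  have E: "E \<in> sets (PiM UNIV (\<lambda>_. borel))"
  proof -
    have "E = {zs \<in> space (PiM UNIV (\<lambda>_. borel)). eps < \<bar>(\<Sum>i<m. zs i) / real m - risk D\<bar>}"
      by (simp add: E_def space_PiM)
    also have "\<dots> \<in> sets (PiM UNIV (\<lambda>_. borel))" by measurable
    finally show ?thesis .
  qed
  have "measure (sample_space D) (failure_event (fixed_sample_alg m eps) (risk D) n eps)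
      \<le> measure (sample_space D) (UNIV \<times> E)"
    using failure_event_fixed_sample_alg_subset[OF m risk_bounds[OF D]] E eps D_prob
    by (intro SS.finite_measure_mono) (auto simp: E_def sets_sample_space)
  also have "\<dots> = measure (PiM UNIV (\<lambda>_. D)) E"
    using D_prob E by (rule measure_sample_space_UNIV_Times)
  also have "\<dots> \<le> \<delta>"
    unfolding E_def using measure_PiM_mean_deviation_le[OF D m(1) eps(1)] \<delta> by linarith
  finally show ?thesis unfolding certified_def .
qed

lemma hoeffding_sample_size:
  fixes eps \<delta> :: real
  assumes eps: "0 < eps" "eps < exp (- exp 2)" and \<delta>: "0 < \<delta>" "\<delta> < 1"
  defines "m \<equiv> nat \<lceil>ln (2/\<delta>) / (2 * eps^2)\<rceil>"
  shows "1 \<le> m" and "real m < (ln (1/\<delta>) + ln (ln (1/eps))) / eps^2"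
    and "2 * exp (-2 * real m * eps^2) \<le> \<delta>"
proof -
  define r where "r = ln (2/\<delta>) / (2 * eps^2)"
  have ln_2_\<delta>: "ln (2/\<delta>) = ln 2 + ln (1/\<delta>)" "0 < ln (1/\<delta>)"
    using \<delta> by (simp_all add: ln_div)
  have "0 < ln (2/\<delta>)" using \<delta> by simp
  then have "0 < r" unfolding r_def using eps by simp
  then have r: "r \<le> real m" "real m < r + 1"
    unfolding m_def r_def[symmetric] by linarith+
  then show "1 \<le> m" using \<open>0 < r\<close> by linarith
  have "ln eps < - exp 2"
    using eps ln_less_cancel_iff[of eps "exp (- exp 2)"] by simp
  then have "exp 2 < ln (1/eps)"
    using eps by (simp add: ln_div)
  then have lnln: "2 < ln (ln (1/eps))"
    by (metis exp_gt_zero ln_exp ln_less_cancel_iff order.strict_trans)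
  have "exp (- exp 2) < (1::real)" by simp
  then have "eps < 1" using eps by linarith
  then have "eps^2 < 1" using eps by (simp add: abs_square_less_1)
  then have numerator: "ln (2/\<delta>) + 2 * eps^2 < 2 * (ln (1/\<delta>) + ln (ln (1/eps)))"
    using lnln ln_2_less_1 ln_2_\<delta> by (smt (verit))
  have "r + 1 = (ln (2/\<delta>) + 2 * eps^2) / (2 * eps^2)"
    using eps by (simp add: r_def field_simps)
  also have "\<dots> < 2 * (ln (1/\<delta>) + ln (ln (1/eps))) / (2 * eps^2)"
    using numerator eps by (intro divide_strict_right_mono) auto
  also have "\<dots> = (ln (1/\<delta>) + ln (ln (1/eps))) / eps^2"
    by (rule mult_divide_mult_cancel_left) simp
  finally have "r + 1 < (ln (1/\<delta>) + ln (ln (1/eps))) / eps^2" .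
  with r show "real m < (ln (1/\<delta>) + ln (ln (1/eps))) / eps^2" by linarith
  have "ln (2/\<delta>) \<le> 2 * real m * eps^2"
    using r(1) eps unfolding r_def by (simp add: field_simps)
  then have "exp (-2 * real m * eps^2) \<le> exp (- ln (2/\<delta>))" by simp
  also have "\<dots> = \<delta> / 2" using \<delta> by (simp add: exp_minus)
  finally show "2 * exp (-2 * real m * eps^2) \<le> \<delta>" by simp
qed

lemma fixed_sample_alg_certified_rate:
  assumes eps: "0 < eps" "eps < exp (- exp 2)" and \<delta>: "0 < \<delta>" "\<delta> < 1"
  shows "\<exists>A. online_alg A \<and>
    (\<forall>D. loss_dist D \<longrightarrow> certified A D ((ln (1/\<delta>) + ln (ln (1/eps))) / eps^2) eps \<delta>)"
proof -
  have "exp (- exp 2) < (1::real)" by simp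
  with eps have "eps < 1" by linarith
  with eps hoeffding_sample_size[OF eps \<delta>] show ?thesis
    by (intro exI[of _ "fixed_sample_alg (nat \<lceil>ln (2/\<delta>) / (2 * eps^2)\<rceil>) eps"] conjI allI impI
        online_alg_fixed_sample_alg certified_fixed_sample_alg) auto
qed

theorem theorem1:
  shows
  "(\<exists>C>0. \<exists>eps0>0. \<forall>eps \<delta>. 0 < eps \<and> eps < eps0 \<and> 0 < \<delta> \<and> \<delta> < 1 \<longrightarrow>
      (\<exists>A. online_alg A \<and>
         (\<forall>D. loss_dist D \<longrightarrow>
            certified A D (C * (ln (1/\<delta>) + ln (ln (1/eps))) / eps^2) eps \<delta>)))
   \<and>
   (\<forall>n' :: real \<Rightarrow> real \<Rightarrow> real measure \<Rightarrow> real.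
      (\<forall>D. loss_dist D \<longrightarrow>
         ((\<lambda>(eps, \<delta>). n' eps \<delta> D * eps^2 / (ln (1/\<delta>) + ln (ln (1/eps)))) \<longlongrightarrow> 0)
           (at_right (0::real) \<times>\<^sub>F at_right (0::real)))
      \<longrightarrow> \<not> (\<exists>A :: real \<Rightarrow> real \<Rightarrow> alg.
              (\<forall>eps \<delta>. online_alg (A eps \<delta>)) \<and>
              (\<exists>eps0>0. \<exists>\<delta>0>0. \<forall>eps \<delta>. 0 < eps \<and> eps < eps0 \<and> 0 < \<delta> \<and> \<delta> < \<delta>0 \<longrightarrow>
                 (\<forall>D. loss_dist D \<longrightarrow> certified (A eps \<delta>) D (n' eps \<delta> D) eps \<delta>))))"
proof (intro conjI allI impI notI)
  show "\<exists>C>0. \<exists>eps0>0. \<forall>eps \<delta>. 0 < eps \<and> eps < eps0 \<and> 0 < \<delta> \<and> \<delta> < 1 \<longrightarrow>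
      (\<exists>A. online_alg A \<and>
         (\<forall>D. loss_dist D \<longrightarrow> certified A D (C * (ln (1/\<delta>) + ln (ln (1/eps))) / eps^2) eps \<delta>))"
    by (intro exI[of _ 1] conjI exI[of _ "exp (- exp 2)"] allI impI)
      (simp_all add: fixed_sample_alg_certified_rate)
next
  fix n' :: "real \<Rightarrow> real \<Rightarrow> real measure \<Rightarrow> real"
  assume lim: "\<forall>D. loss_dist D \<longrightarrow> ((\<lambda>(eps, \<delta>). n' eps \<delta> D * eps^2 / (ln (1/\<delta>) + ln (ln (1/eps))))
      \<longlongrightarrow> 0) (at_right 0 \<times>\<^sub>F at_right 0)"
    and "\<exists>A :: real \<Rightarrow> real \<Rightarrow> alg. (\<forall>eps \<delta>. online_alg (A eps \<delta>)) \<and>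
      (\<exists>eps0>0. \<exists>\<delta>0>0. \<forall>eps \<delta>. 0 < eps \<and> eps < eps0 \<and> 0 < \<delta> \<and> \<delta> < \<delta>0 \<longrightarrow>
         (\<forall>D. loss_dist D \<longrightarrow> certified (A eps \<delta>) D (n' eps \<delta> D) eps \<delta>))"
  then obtain A eps0 \<delta>0 where A: "\<forall>eps \<delta>. online_alg (A eps \<delta>)" and "0 < eps0" "0 < \<delta>0"
    and cert: "\<forall>eps \<delta>. 0 < eps \<and> eps < eps0 \<and> 0 < \<delta> \<and> \<delta> < \<delta>0 \<longrightarrow>
      (\<forall>D. loss_dist D \<longrightarrow> certified (A eps \<delta>) D (n' eps \<delta> D) eps \<delta>)"
    by blast
  show False
    by (rule no_certified_alg_below_rate[OF lim A[rule_format] \<open>0 < eps0\<close> \<open>0 < \<delta>0\<close>])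
      (use cert in blast)
qed

end
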